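(* Let $m=m(n)=O(n\log\log n)$ and let $G\sim G(n,m)$. Then, for all sufficiently large $n$, $$\Pr\big(\delta(G)\geq 2\big)\leq n\,e^{-2m e^{-2m/n}}.$$
   Context: $G(n,m)$ is the uniform random graph model: $G$ is chosen uniformly at random among all graphs on vertex set $[n]$ with exactly $m$ edges. $\delta(G)$ denotes the minimum degree of $G$. *)

theory Defs
  imports "HOL-Probability.Probability" "HOL-Library.Landau_Symbols"
begin

text \<open>Simple graphs on vertex set [n] = {0..<n}, represented by their edge sets
  (sets of 2-element subsets of {0..<n}).\<close>

definition all_edges :: "nat \<Rightarrow> nat set set" where
  "all_edges n = {e. \<exists>u v. u < n \<and> v < n \<and> u \<noteq> v \<and> e = {u, v}}"

definition Gnm_space :: "nat \<Rightarrow> nat \<Rightarrow> nat set set set" where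
  "Gnm_space n m = {E. E \<subseteq> all_edges n \<and> card E = m}"

definition Gnm :: "nat \<Rightarrow> nat \<Rightarrow> nat set set pmf" where
  "Gnm n m = pmf_of_set (Gnm_space n m)"

definition degree :: "nat set set \<Rightarrow> nat \<Rightarrow> nat" where
  "degree E v = card {e \<in> E. v \<in> e}"

definition min_degree :: "nat \<Rightarrow> nat set set \<Rightarrow> nat" where
  "min_degree n E = Min (degree E ` {..<n})"

end

theory Submission
  imports Defs "HOL-Combinatorics.Multiset_Permutations" "HOL-Real_Asymp.Real_Asymp"
begin

(* Listing the m edges of a graph of minimum degree at least 2 in one of m! orders and orienting
   each of them in one of 2 ways turns the graph into a map from the 2m half-edges to [n] all of
   whose fibres have at least two elements, and different choices give different maps.  Such maps
   are counted by (2m)! [x^(2m)] (e^x - 1 - x)^n <= (2m)! (e^l - 1 - l)^n / l^(2m) for every l > 0,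
   while there are binom(N, m) >= (N - m)^m / m! graphs in total.  With l = d = 2m/n and
   Stirling-type estimates the probability is at most e (2m+1) exp(d + d^2 - n (1+d) e^(-d)),
   which is n exp(-2m e^(-d)) times a factor that is at most 1 as soon as d <= (ln n)/2; this holds
   eventually because m = O(n ln ln n). *)

section \<open>Maps all of whose fibres have at least two elements\<close>

lemma sum_exp_series_from_2_le:
  fixes l :: real
  assumes "0 \<le> l"
  shows "(\<Sum>k=2..K. l ^ k / fact k) \<le> exp l - 1 - l"
proof -
  have "(\<Sum>k<K+2. l ^ k /\<^sub>R fact k) \<le> (\<Sum>k. l ^ k /\<^sub>R fact k)"
    by (rule sum_le_suminf[OF summable_exp_generic]) (use assms in auto)
  then have "(\<Sum>k<K+2. l ^ k / fact k) \<le> exp l"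
    by (simp add: exp_def divide_inverse mult.commute)
  moreover have "(\<Sum>k<K+2. l ^ k / fact k)
                   = (\<Sum>k<2. l ^ k / fact k) + (\<Sum>k=2..<K+2. l ^ k / fact k)"
    unfolding lessThan_atLeast0 by (rule sum.atLeastLessThan_concat[symmetric]) auto
  moreover have "(\<Sum>k<2. l ^ k / fact k) = 1 + l"
    by (simp add: numeral_2_eq_2)
  moreover have "(\<Sum>k=2..K. l ^ k / fact k) \<le> (\<Sum>k=2..<K+2. l ^ k / fact k)"
    by (rule sum_mono2) (use assms in auto)
  ultimately show ?thesis
    by linarith
qed

definition fibre_ge2_maps :: "nat \<Rightarrow> 'a set \<Rightarrow> ('a \<Rightarrow> nat) set" where
  "fibre_ge2_maps n D = {f \<in> D \<rightarrow>\<^sub>E {..<n}. \<forall>v<n. 2 \<le> card {x \<in> D. f x = v}}"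

lemma finite_fibre_ge2_maps: "finite D \<Longrightarrow> finite (fibre_ge2_maps n D)"
  unfolding fibre_ge2_maps_def
  by (rule finite_subset[of _ "D \<rightarrow>\<^sub>E {..<n}"]) (auto intro: finite_PiE)

lemma card_fibre_ge2_maps_Suc_le:
  assumes D: "finite D"
  shows "card (fibre_ge2_maps (Suc n) D)
           \<le> (\<Sum>A | A \<subseteq> D \<and> 2 \<le> card A. card (fibre_ge2_maps n (D - A)))"
proof -
  define S where "S = {A. A \<subseteq> D \<and> 2 \<le> card A}"
  define extend where "extend A t x = (if x \<in> A then n else t x)" for A and t :: "'a \<Rightarrow> nat" and x
  have finS: "finite S"
    unfolding S_def using D by auto
  have "fibre_ge2_maps (Suc n) D \<subseteq> (\<Union>A\<in>S. extend A ` fibre_ge2_maps n (D - A))"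
  proof
    fix f assume f: "f \<in> fibre_ge2_maps (Suc n) D"
    define A where "A = {x \<in> D. f x = n}"
    have fD: "f \<in> D \<rightarrow>\<^sub>E {..<Suc n}"
      and fibres: "\<And>v. v < Suc n \<Longrightarrow> 2 \<le> card {x \<in> D. f x = v}"
      using f unfolding fibre_ge2_maps_def by auto
    have "restrict f (D - A) \<in> fibre_ge2_maps n (D - A)"
    proof -
      have "{x \<in> D - A. restrict f (D - A) x = v} = {x \<in> D. f x = v}" if "v < n" for v
        using that unfolding A_def by auto
      then show ?thesis
        using fD fibres unfolding fibre_ge2_maps_def A_def by (auto simp: PiE_def Pi_def less_Suc_eq)
    qed
    moreover have "f = extend A (restrict f (D - A))"
      using fD unfolding extend_def A_def by (auto simp: PiE_def extensional_def)
    moreover have "A \<in> S"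
      unfolding S_def A_def using fibres[of n] by auto
    ultimately show "f \<in> (\<Union>A\<in>S. extend A ` fibre_ge2_maps n (D - A))"
      by blast
  qed
  then have "card (fibre_ge2_maps (Suc n) D) \<le> card (\<Union>A\<in>S. extend A ` fibre_ge2_maps n (D - A))"
    by (rule card_mono[rotated]) (use finS D in \<open>auto intro!: finite_fibre_ge2_maps\<close>)
  also have "\<dots> \<le> (\<Sum>A\<in>S. card (extend A ` fibre_ge2_maps n (D - A)))"
    by (rule card_UN_le[OF finS])
  also have "\<dots> \<le> (\<Sum>A\<in>S. card (fibre_ge2_maps n (D - A)))"
    by (intro sum_mono card_image_le) (use D in \<open>auto intro!: finite_fibre_ge2_maps\<close>)
  finally show ?thesis
    unfolding S_def .
qed

lemma sum_subsets_card_ge2_le: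
  fixes l :: real
  assumes D: "finite D" and l: "0 \<le> l"
  shows "(\<Sum>A | A \<subseteq> D \<and> 2 \<le> card A. fact (card D - card A) * l ^ card A)
           \<le> fact (card D) * (exp l - 1 - l)"
proof -
  define S where "S = {A. A \<subseteq> D \<and> 2 \<le> card A}"
  have subsets_k: "{A \<in> S. card A = k} = {A. A \<subseteq> D \<and> card A = k}" if "2 \<le> k" for k
    unfolding S_def using that by auto
  have "(\<Sum>A\<in>S. fact (card D - card A) * l ^ card A)
      = (\<Sum>k=2..card D. \<Sum>A | A \<in> S \<and> card A = k. fact (card D - card A) * l ^ card A)"
    by (rule sum.group[symmetric]) (use D in \<open>auto simp: S_def intro: card_mono\<close>)
  also have "\<dots> = (\<Sum>k=2..card D. real (card D choose k) * fact (card D - k) * l ^ k)"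
    by (intro sum.cong refl) (simp add: subsets_k n_subsets[OF D])
  also have "\<dots> = fact (card D) * (\<Sum>k=2..card D. l ^ k / fact k)"
    unfolding sum_distrib_left by (intro sum.cong refl) (simp add: binomial_fact field_simps)
  also have "\<dots> \<le> fact (card D) * (exp l - 1 - l)"
    by (rule mult_left_mono[OF sum_exp_series_from_2_le[OF l]]) simp
  finally show ?thesis
    unfolding S_def .
qed

text \<open>Such maps from an N-element set to [n] have exponential generating function
  (e^x - 1 - x)^n, and this is the saddle-point bound for its N-th coefficient.\<close>
lemma card_fibre_ge2_maps_le:
  fixes l :: real
  assumes "finite D" and l: "0 < l"
  shows "card (fibre_ge2_maps n D) * l ^ card D \<le> fact (card D) * (exp l - 1 - l) ^ n"
  using assms(1)
proof (induction n arbitrary: D)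
  case 0
  have "fibre_ge2_maps 0 D \<subseteq> D \<rightarrow>\<^sub>E {}"
    unfolding fibre_ge2_maps_def by auto
  then have "card (fibre_ge2_maps 0 D) \<le> card (D \<rightarrow>\<^sub>E ({} :: nat set))"
    by (rule card_mono[rotated]) (simp add: 0 finite_PiE)
  also have "\<dots> = 0 ^ card D"
    by (simp add: 0 card_PiE)
  finally have "real (card (fibre_ge2_maps 0 D)) \<le> 0 ^ card D"
    using of_nat_mono[where 'a = real] by fastforce
  then have "card (fibre_ge2_maps 0 D) * l ^ card D \<le> 0 ^ card D * l ^ card D"
    using l by (intro mult_right_mono) auto
  also have "\<dots> \<le> fact (card D)"
    by (cases "card D") auto
  finally show ?case
    by simp
next
  case (Suc n)
  define F where "F = exp l - 1 - l"
  define S where "S = {A. A \<subseteq> D \<and> 2 \<le> card A}"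
  have F0: "0 \<le> F"
    unfolding F_def using exp_ge_add_one_self[of l] by linarith
  have card_diff: "card (D - A) = card D - card A" "card D = card (D - A) + card A" if "A \<in> S" for A
  proof -
    have "A \<subseteq> D" "finite A"
      using that Suc.prems finite_subset unfolding S_def by auto
    then show "card (D - A) = card D - card A" "card D = card (D - A) + card A"
      by (simp_all add: card_Diff_subset card_mono[OF Suc.prems])
  qed
  have "card (fibre_ge2_maps (Suc n) D) * l ^ card D
          \<le> (\<Sum>A\<in>S. real (card (fibre_ge2_maps n (D - A)))) * l ^ card D"
    using card_fibre_ge2_maps_Suc_le[OF Suc.prems, of n] l unfolding S_def
    by (intro mult_right_mono) (simp_all flip: of_nat_sum)
  also have "\<dots> = (\<Sum>A\<in>S. (card (fibre_ge2_maps n (D - A)) * l ^ card (D - A)) * l ^ card A)"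
    unfolding sum_distrib_right by (intro sum.cong refl) (simp add: card_diff(2) power_add)
  also have "\<dots> \<le> (\<Sum>A\<in>S. (fact (card D - card A) * F ^ n) * l ^ card A)"
  proof (intro sum_mono mult_right_mono)
    fix A assume "A \<in> S"
    then show "card (fibre_ge2_maps n (D - A)) * l ^ card (D - A) \<le> fact (card D - card A) * F ^ n"
      using Suc.IH[of "D - A"] Suc.prems card_diff(1) unfolding F_def by simp
  qed (use l in simp)
  also have "\<dots> = F ^ n * (\<Sum>A\<in>S. fact (card D - card A) * l ^ card A)"
    unfolding sum_distrib_left by (simp add: mult_ac)
  also have "\<dots> \<le> F ^ n * (fact (card D) * F)"
    using sum_subsets_card_ge2_le[OF Suc.prems, of l] l F0
    by (intro mult_left_mono) (auto simp: S_def F_def)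
  finally show ?case
    by (simp add: F_def mult_ac)
qed

section \<open>Graphs of minimum degree at least two as half-edge labellings\<close>

lemma all_edges_eq: "all_edges n = {e. e \<subseteq> {..<n} \<and> card e = 2}"
  unfolding all_edges_def by (auto simp: card_2_iff)

lemma finite_all_edges: "finite (all_edges n)"
  unfolding all_edges_eq by (rule finite_subset[of _ "Pow {..<n}"]) auto

lemma card_all_edges: "card (all_edges n) = n choose 2"
  unfolding all_edges_eq by (simp add: n_subsets)

lemma all_edges_Min_Max:
  assumes "e \<in> all_edges n"
  shows "e = {Min e, Max e}" "Min e \<noteq> Max e" "Min e < n" "Max e < n"
proof -
  obtain u v where "u < n" "v < n" "u \<noteq> v" "e = {u, v}"
    using assms unfolding all_edges_def by auto
  then show "e = {Min e, Max e}" "Min e \<noteq> Max e" "Min e < n" "Max e < n"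
    by (auto simp: min_def max_def)
qed

lemma finite_Gnm_space: "finite (Gnm_space n m)"
  unfolding Gnm_space_def by (rule finite_subset[of _ "Pow (all_edges n)"]) (auto simp: finite_all_edges)

lemma card_Gnm_space: "card (Gnm_space n m) = (n choose 2) choose m"
  unfolding Gnm_space_def by (simp add: n_subsets finite_all_edges card_all_edges)

definition min_degree_ge2_graphs :: "nat \<Rightarrow> nat \<Rightarrow> nat set set set" where
  "min_degree_ge2_graphs n m = {E \<in> Gnm_space n m. \<forall>v<n. 2 \<le> degree E v}"

lemma degree_eq_card_nth:
  assumes "es \<in> permutations_of_set E"
  shows "degree E v = card {i. i < length es \<and> v \<in> es ! i}"
proof -
  have "{e \<in> E. v \<in> e} = (!) es ` {i. i < length es \<and> v \<in> es ! i}"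
    using permutations_of_setD(1)[OF assms] by (auto simp: in_set_conv_nth)
  moreover have "inj_on ((!) es) {i. i < length es \<and> v \<in> es ! i}"
    using permutations_of_setD(2)[OF assms] by (simp add: inj_on_nth)
  ultimately show ?thesis
    unfolding degree_def by (simp add: card_image)
qed

text \<open>The graph with edge list es, each edge oriented by ob, as a map from the half-edges
  {..<length es} \<times> UNIV to the vertices.\<close>
definition endpoint_labelling :: "nat set list \<Rightarrow> (nat \<Rightarrow> bool) \<Rightarrow> nat \<times> bool \<Rightarrow> nat" where
  "endpoint_labelling es ob =
     restrict (\<lambda>(i, b). if b = ob i then Min (es ! i) else Max (es ! i)) ({..<length es} \<times> UNIV)"

lemma endpoint_labelling_inject:
  assumes es: "set es \<subseteq> all_edges n" "ob \<in> {..<length es} \<rightarrow>\<^sub>E UNIV"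
    and es': "set es' \<subseteq> all_edges n" "ob' \<in> {..<length es} \<rightarrow>\<^sub>E UNIV"
    and len: "length es' = length es"
    and eq: "endpoint_labelling es ob = endpoint_labelling es' ob'"
  shows "es = es' \<and> ob = ob'"
proof -
  have edges: "es ! i \<in> all_edges n" "es' ! i \<in> all_edges n" if "i < length es" for i
    using that es(1) es'(1) len by (auto dest: nth_mem)
  have "{endpoint_labelling xs ob (i, True), endpoint_labelling xs ob (i, False)} = xs ! i"
    if "i < length xs" "xs ! i \<in> all_edges n" for xs ob i
    using that all_edges_Min_Max(1)[OF that(2)] unfolding endpoint_labelling_def by auto
  then have nth_eq: "es ! i = es' ! i" if "i < length es" for i
    using that eq len edges by metis
  then have "es = es'"
    using len by (simp add: nth_equalityI)
  moreover have "ob i = ob' i" for i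
  proof (cases "i < length es")
    case True
    have "endpoint_labelling es ob (i, ob i) = Min (es ! i)"
         "endpoint_labelling es' ob' (i, ob i) = (if ob i = ob' i then Min (es ! i) else Max (es ! i))"
      using True len nth_eq unfolding endpoint_labelling_def by auto
    then show ?thesis
      using eq all_edges_Min_Max(2)[OF edges(1)[OF True]] by metis
  next
    case False
    then show ?thesis
      using es(2) es'(2) by (auto simp: PiE_def extensional_def)
  qed
  ultimately show ?thesis
    by auto
qed

lemma endpoint_labelling_in_fibre_ge2_maps:
  assumes E: "E \<in> min_degree_ge2_graphs n m" and es: "es \<in> permutations_of_set E"
  shows "endpoint_labelling es ob \<in> fibre_ge2_maps n ({..<m} \<times> UNIV)"
proof -
  have len: "length es = m" and edges: "set es \<subseteq> all_edges n"
    using E length_finite_permutations_of_set[OF es] permutations_of_setD(1)[OF es]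
    by (auto simp: min_degree_ge2_graphs_def Gnm_space_def)
  then have edge: "es ! i \<in> all_edges n" if "i < m" for i
    using that by (auto dest: nth_mem)
  have "endpoint_labelling es ob \<in> ({..<m} \<times> UNIV) \<rightarrow>\<^sub>E {..<n}"
    using len edge all_edges_Min_Max(3,4) unfolding endpoint_labelling_def by auto
  moreover have "2 \<le> card {x \<in> {..<m} \<times> UNIV. endpoint_labelling es ob x = v}" if "v < n" for v
  proof -
    have "2 \<le> card {i. i < m \<and> v \<in> es ! i}"
      using E that degree_eq_card_nth[OF es] len unfolding min_degree_ge2_graphs_def by auto
    also have "\<dots> \<le> card {x \<in> {..<m} \<times> UNIV. endpoint_labelling es ob x = v}"
    proof (rule card_inj_on_le[where f = "\<lambda>i. (i, if Min (es ! i) = v then ob i else \<not> ob i)"])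
      have "v = Min (es ! i) \<or> v = Max (es ! i)" if "i < m" "v \<in> es ! i" for i
        using that all_edges_Min_Max(1)[OF edge] by blast
      then show "(\<lambda>i. (i, if Min (es ! i) = v then ob i else \<not> ob i)) ` {i. i < m \<and> v \<in> es ! i}
                   \<subseteq> {x \<in> {..<m} \<times> UNIV. endpoint_labelling es ob x = v}"
        using len unfolding endpoint_labelling_def by (auto; blast)
    qed (auto intro: inj_onI)
    finally show ?thesis .
  qed
  ultimately show ?thesis
    unfolding fibre_ge2_maps_def by blast
qed

lemma card_min_degree_ge2_graphs_le:
  "card (min_degree_ge2_graphs n m) * (fact m * 2 ^ m)
     \<le> card (fibre_ge2_maps n ({..<m} \<times> (UNIV :: bool set)))"
proof -
  define X where "X = (SIGMA E:min_degree_ge2_graphs n m. permutations_of_set E)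
                        \<times> ({..<m} \<rightarrow>\<^sub>E (UNIV :: bool set))"
  have graph: "finite E" "card E = m" "E \<subseteq> all_edges n" if "E \<in> min_degree_ge2_graphs n m" for E
    using that finite_all_edges finite_subset unfolding min_degree_ge2_graphs_def Gnm_space_def by auto
  have "finite (min_degree_ge2_graphs n m)"
    using finite_Gnm_space finite_subset unfolding min_degree_ge2_graphs_def by fastforce
  then have "card X = card (min_degree_ge2_graphs n m) * (fact m * 2 ^ m)"
    unfolding X_def by (simp add: card_cartesian_product card_PiE graph)
  moreover have "inj_on (\<lambda>((E, es), ob). endpoint_labelling es ob) X"
  proof (rule inj_onI)
    fix x y
    assume "x \<in> X" "y \<in> X" and eq: "(\<lambda>((E, es), ob). endpoint_labelling es ob) x
                                     = (\<lambda>((E, es), ob). endpoint_labelling es ob) y"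
    then obtain E es ob E' es' ob' where xy: "x = ((E, es), ob)" "y = ((E', es'), ob')"
      and E: "E \<in> min_degree_ge2_graphs n m" "es \<in> permutations_of_set E"
             "ob \<in> {..<m} \<rightarrow>\<^sub>E UNIV"
      and E': "E' \<in> min_degree_ge2_graphs n m" "es' \<in> permutations_of_set E'"
              "ob' \<in> {..<m} \<rightarrow>\<^sub>E UNIV"
      unfolding X_def by auto
    have "set es = E" "set es' = E'" "length es = m" "length es' = m"
      using E E' graph by (auto simp: permutations_of_setD(1) length_finite_permutations_of_set)
    then show "x = y"
      using endpoint_labelling_inject[of es n ob es' ob'] E E' eq graph(3) unfolding xy by auto
  qed
  moreover have "(\<lambda>((E, es), ob). endpoint_labelling es ob) ` X
                  \<subseteq> fibre_ge2_maps n ({..<m} \<times> UNIV)"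
    unfolding X_def using endpoint_labelling_in_fibre_ge2_maps by auto
  moreover have "finite (fibre_ge2_maps n ({..<m} \<times> (UNIV :: bool set)))"
    by (simp add: finite_fibre_ge2_maps)
  ultimately show ?thesis
    by (metis card_inj_on_le)
qed

section \<open>The probability bound\<close>

lemma prob_min_degree_ge2_eq:
  assumes "1 \<le> n" "m \<le> n choose 2"
  shows "measure_pmf.prob (Gnm n m) {E. 2 \<le> min_degree n E}
           = card (min_degree_ge2_graphs n m) / card (Gnm_space n m)"
proof -
  have "Gnm_space n m \<noteq> {}"
    using card_Gnm_space[of n m] assms(2) by (metis card.empty zero_less_binomial_iff not_less0)
  moreover have "2 \<le> min_degree n E \<longleftrightarrow> (\<forall>v<n. 2 \<le> degree E v)" for E
    unfolding min_degree_def using assms(1) by (subst Min_ge_iff) (auto simp: lessThan_empty_iff)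
  then have "Gnm_space n m \<inter> {E. 2 \<le> min_degree n E} = min_degree_ge2_graphs n m"
    unfolding min_degree_ge2_graphs_def by auto
  ultimately show ?thesis
    unfolding Gnm_def by (simp add: measure_pmf_of_set finite_Gnm_space)
qed

lemma power_diff_le_choose_mult_fact:
  assumes "m \<le> N"
  shows "(real N - real m) ^ m \<le> real (N choose m) * fact m"
proof -
  have "(real N - real m) ^ m = (\<Prod>i = 0..<m. real N - real m)"
    by simp
  also have "\<dots> \<le> (\<Prod>i = 0..<m. real N - real i)"
    by (rule prod_mono) (use assms in auto)
  also have "\<dots> = real (N choose m) * fact m"
    by (simp add: binomial_gbinomial gbinomial_mult_fact')
  finally show ?thesis .
qed

lemma choose_two_real: "2 * real (n choose 2) = real n * (real n - 1)"
proof -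
  have "(real n gchoose 2) * fact 2 = (\<Prod>i = 0..<2. real n - real i)"
    by (rule gbinomial_mult_fact')
  then show ?thesis
    by (simp add: binomial_gbinomial numeral_2_eq_2 mult.commute)
qed

lemma prob_min_degree_ge2_le:
  fixes l :: real
  assumes n: "1 \<le> n" and m: "2 * real m < real n * (real n - 1)" and l: "0 < l"
  shows "measure_pmf.prob (Gnm n m) {E. 2 \<le> min_degree n E}
           \<le> fact (2 * m) * (exp l - 1 - l) ^ n
                 / (l ^ (2 * m) * (real n * (real n - 1) - 2 * real m) ^ m)"
proof -
  define N where "N = n choose 2"
  define G where "G = real (card (min_degree_ge2_graphs n m))"
  define S where "S = real (card (Gnm_space n m))"
  define T where "T = real (card (fibre_ge2_maps n ({..<m} \<times> (UNIV :: bool set))))"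
  define Q where "Q = real n * (real n - 1) - 2 * real m"
  have Q: "Q = 2 * (real N - real m)" "0 < Q"
    unfolding Q_def N_def using choose_two_real[of n] m by auto
  then have mN: "m \<le> N"
    by simp
  have S: "0 < S"
    unfolding S_def card_Gnm_space using mN N_def by simp
  have GT: "G * (fact m * 2 ^ m) \<le> T"
    using of_nat_mono[OF card_min_degree_ge2_graphs_le[of n m], where 'a=real]
    unfolding G_def T_def by simp
  have QS: "Q ^ m \<le> S * (fact m * 2 ^ m)"
  proof -
    have "Q ^ m = 2 ^ m * (real N - real m) ^ m"
      unfolding Q(1) by (rule power_mult_distrib)
    also have "\<dots> \<le> 2 ^ m * (S * fact m)"
      using power_diff_le_choose_mult_fact[OF mN] unfolding S_def card_Gnm_space N_def by simp
    finally show ?thesis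
      by (simp add: mult_ac)
  qed
  have "G * Q ^ m \<le> G * (S * (fact m * 2 ^ m))"
    by (rule mult_left_mono[OF QS]) (simp add: G_def)
  also have "\<dots> = S * (G * (fact m * 2 ^ m))"
    by (simp only: mult_ac)
  also have "\<dots> \<le> S * T"
    by (rule mult_left_mono[OF GT]) (use S in simp)
  finally have "G * Q ^ m \<le> S * T" .
  then have "G / S \<le> T / Q ^ m"
    using S Q(2) by (simp add: field_simps)
  also have "\<dots> \<le> fact (2 * m) * (exp l - 1 - l) ^ n / (l ^ (2 * m) * Q ^ m)"
  proof -
    have "T * l ^ (2 * m) \<le> fact (2 * m) * (exp l - 1 - l) ^ n"
      using card_fibre_ge2_maps_le[of "{..<m} \<times> (UNIV :: bool set)" l n] l
      by (simp add: T_def card_cartesian_product mult.commute)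
    then have "T \<le> fact (2 * m) * (exp l - 1 - l) ^ n / l ^ (2 * m)"
      using l by (simp add: pos_le_divide_eq)
    then have "T / Q ^ m \<le> fact (2 * m) * (exp l - 1 - l) ^ n / l ^ (2 * m) / Q ^ m"
      by (rule divide_right_mono) (use Q(2) in simp)
    then show ?thesis
      by (simp add: divide_divide_eq_left)
  qed
  finally show ?thesis
    using prob_min_degree_ge2_eq[OF n] mN unfolding G_def S_def Q_def N_def by simp
qed

lemma fact_le_Suc_power_mult_exp: "fact k \<le> (real k + 1) ^ (k + 1) * exp (- real k)"
proof (induction k)
  case 0
  then show ?case
    by simp
next
  case (Suc k)
  define r where "r = (real k + 1) / (real k + 2)"
  have r: "r ^ (k + 2) \<le> exp (-1)"
    using exp_ge_one_minus_x_over_n_power_n[of 1 "k + 2"] by (simp add: r_def field_simps)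
  have e: "exp 1 * (real k + 1) ^ (k + 2) \<le> (real k + 2) ^ (k + 2)"
  proof -
    have "exp 1 * (real k + 1) ^ (k + 2) = exp 1 * r ^ (k + 2) * (real k + 2) ^ (k + 2)"
      by (simp add: r_def power_divide)
    also have "\<dots> \<le> exp 1 * exp (-1) * (real k + 2) ^ (k + 2)"
      using r by (intro mult_right_mono mult_left_mono) auto
    finally show ?thesis
      by (simp add: exp_minus)
  qed
  have "fact (Suc k) = (real k + 1) * fact k"
    by simp
  also have "\<dots> \<le> (real k + 1) * ((real k + 1) ^ (k + 1) * exp (- real k))"
    by (rule mult_left_mono[OF Suc.IH]) simp
  also have "\<dots> = (exp 1 * (real k + 1) ^ (k + 2)) * exp (- real (Suc k))"
    by (simp add: exp_diff exp_minus field_simps)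
  also have "\<dots> \<le> (real k + 2) ^ (k + 2) * exp (- real (Suc k))"
    by (rule mult_right_mono[OF e]) simp
  finally show ?case
    by (simp add: add.commute)
qed

lemma fact_le_power_mult_exp: "fact k \<le> exp 1 * (real k + 1) * real k ^ k * exp (- real k)"
proof -
  have Suc_power_le: "(real k + 1) ^ k \<le> exp 1 * real k ^ k"
  proof (cases "k = 0")
    case False
    have "(real k + 1) ^ k = real k ^ k * (1 + 1 / real k) ^ k"
      using False by (simp add: field_simps flip: power_mult_distrib)
    also have "\<dots> \<le> real k ^ k * exp 1"
      using exp_ge_one_plus_x_over_n_power_n[of k 1] False by (intro mult_left_mono) auto
    finally show ?thesis
      by (simp add: mult.commute)
  qed simp
  have "fact k \<le> (real k + 1) * (real k + 1) ^ k * exp (- real k)"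
    using fact_le_Suc_power_mult_exp[of k] by simp
  also have "\<dots> \<le> (real k + 1) * (exp 1 * real k ^ k) * exp (- real k)"
    using Suc_power_le by (intro mult_right_mono mult_left_mono) auto
  also have "\<dots> = exp 1 * (real k + 1) * real k ^ k * exp (- real k)"
    by (simp only: mult_ac)
  finally show ?thesis .
qed

lemma exp_minus_one_minus_power_le:
  fixes d :: real
  assumes "0 \<le> d"
  shows "(exp d - 1 - d) ^ n \<le> exp (n * d) * exp (- (n * (1 + d) * exp (- d)))"
proof -
  have "exp d - 1 - d = exp d * (1 - (1 + d) * exp (- d))"
    by (simp add: algebra_simps exp_minus)
  also have "\<dots> \<le> exp d * exp (- ((1 + d) * exp (- d)))"
    using exp_ge_add_one_self[of "- ((1 + d) * exp (- d))"] by simp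
  also have "\<dots> = exp (d - (1 + d) * exp (- d))"
    by (simp flip: exp_add)
  finally have base: "exp d - 1 - d \<le> exp (d - (1 + d) * exp (- d))" .
  have "0 \<le> exp d - 1 - d"
    using exp_ge_add_one_self[of d] by linarith
  then have "(exp d - 1 - d) ^ n \<le> exp (d - (1 + d) * exp (- d)) ^ n"
    using base by (intro power_mono)
  also have "\<dots> = exp (n * (d - (1 + d) * exp (- d)))"
    by (rule exp_of_nat_mult[symmetric])
  also have "\<dots> = exp (n * d) * exp (- (n * (1 + d) * exp (- d)))"
    by (simp add: algebra_simps flip: exp_add)
  finally show ?thesis .
qed

lemma one_le_exp_two_mult_one_minus:
  fixes x :: real
  assumes "0 \<le> x" "x \<le> 1 / 2"
  shows "1 \<le> exp (2 * x) * (1 - x)"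
proof -
  have "x * (2 * x) \<le> x"
    using assms mult_left_mono[of "2 * x" 1 x] by simp
  then have "1 \<le> (1 + 2 * x) * (1 - x)"
    by (simp add: algebra_simps)
  also have "\<dots> \<le> exp (2 * x) * (1 - x)"
    using assms exp_ge_add_one_self[of "2 * x"] by (intro mult_right_mono) auto
  finally show ?thesis .
qed

lemma prob_min_degree_ge2_le_exp:
  assumes m: "1 \<le> m" and small: "real n + 2 * real m \<le> real n ^ 2 / 2"
  defines "d \<equiv> 2 * real m / real n"
  shows "measure_pmf.prob (Gnm n m) {E. 2 \<le> min_degree n E}
           \<le> exp 1 * (real n * d + 1) * exp (d + d^2 - real n * exp (- d))
               * exp (- 2 * real m * exp (- d))"
proof -
  define Q where "Q = real n * (real n - 1) - 2 * real m"
  define R where "R = exp 1 * (2 * real m + 1) * exp (- (real n * (1 + d) * exp (- d)))"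
  have n: "0 < real n"
    using small m by (cases n) auto
  have d: "0 < d" and nd: "real n * d = 2 * real m"
    unfolding d_def using m n by auto
  have Q: "real n ^ 2 / 2 \<le> Q"
    using small unfolding Q_def by (simp add: power2_eq_square algebra_simps)
  moreover have "0 < real n ^ 2 / 2"
    using n by simp
  ultimately have Q0: "0 < Q"
    by linarith
  have fact_le: "fact (2 * m)
                   \<le> exp 1 * (2 * real m + 1) * (real n * d) ^ (2 * m) * exp (- (real n * d))"
    using fact_le_power_mult_exp[of "2 * m"] unfolding nd by simp
  have F0: "0 \<le> exp d - 1 - d"
    using exp_ge_add_one_self[of d] by linarith
  have power_le: "(exp d - 1 - d) ^ n \<le> exp (real n * d) * exp (- (real n * (1 + d) * exp (- d)))"
    using exp_minus_one_minus_power_le[of d n] d by simp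
  have n_power_le: "real n ^ (2 * m) \<le> exp (d + d^2) * Q ^ m"
  proof -
    define x where "x = (real n + 2 * real m) / real n ^ 2"
    have "0 \<le> x" "x \<le> 1 / 2"
      unfolding x_def using small n by (auto simp: field_simps)
    then have "1 \<le> (exp (2 * x) * (1 - x)) ^ m"
      using one_le_exp_two_mult_one_minus by (simp add: one_le_power)
    also have "\<dots> = exp (d + d^2) * (Q / real n ^ 2) ^ m"
    proof -
      have e1: "exp (2 * x) ^ m = exp (d + d^2)"
        unfolding x_def d_def using n by (simp flip: exp_of_nat_mult add: field_simps power2_eq_square)
      moreover have e2: "1 - x = Q / real n ^ 2"
        unfolding x_def Q_def using n by (simp add: field_simps power2_eq_square)
      ultimately show ?thesis
        by (simp only: power_mult_distrib e1 e2)
    qed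
    finally have "(real n ^ 2) ^ m \<le> exp (d + d^2) * Q ^ m"
      using n by (simp add: power_divide field_simps)
    then show ?thesis
      unfolding power_mult .
  qed
  have "measure_pmf.prob (Gnm n m) {E. 2 \<le> min_degree n E}
          \<le> fact (2 * m) * (exp d - 1 - d) ^ n / (d ^ (2 * m) * Q ^ m)"
    using prob_min_degree_ge2_le[of n m d] Q0 d n unfolding Q_def by simp
  also have "\<dots> \<le> (exp 1 * (2 * real m + 1) * (real n * d) ^ (2 * m) * exp (- (real n * d)))
                   * (exp (real n * d) * exp (- (real n * (1 + d) * exp (- d)))) / (d ^ (2 * m) * Q ^ m)"
    using fact_le power_le d Q0 zero_le_power[OF F0] by (intro divide_right_mono mult_mono) auto
  also have "\<dots> = R * real n ^ (2 * m) / Q ^ m"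
    using d Q0 by (simp add: R_def power_mult_distrib exp_minus field_simps)
  also have "\<dots> \<le> R * exp (d + d^2)"
    using n_power_le Q0 by (simp add: R_def pos_divide_le_eq mult_ac)
  also have "\<dots> = exp 1 * (real n * d + 1) * exp (d + d^2 - real n * exp (- d))
                   * exp (- 2 * real m * exp (- d))"
  proof -
    have "real n * (1 + d) * exp (- d) = real n * exp (- d) + 2 * real m * exp (- d)"
      unfolding nd[symmetric] by (simp add: algebra_simps)
    then have "exp (- (real n * (1 + d) * exp (- d))) * exp (d + d^2)
                 = exp (d + d^2 - real n * exp (- d)) * exp (- 2 * real m * exp (- d))"
      by (simp add: algebra_simps flip: exp_add)
    then show ?thesis
      unfolding R_def nd by (simp only: mult.assoc)
  qed
  finally show ?thesis .
qed

section \<open>Asymptotics\<close>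

text \<open>The left-hand side increases with d, so the worst case is d = ln n / 2.\<close>
lemma eventually_error_factor_le:
  "\<forall>\<^sub>F n in at_top. \<forall>d. 0 \<le> d \<and> d \<le> ln (real n) / 2 \<longrightarrow>
     exp 1 * (real n * d + 1) * exp (d + d^2 - real n * exp (- d)) \<le> real n"
proof -
  have "\<forall>\<^sub>F n in at_top. exp 1 * (real n * (ln (real n) / 2) + 1)
          * exp (ln (real n) / 2 + (ln (real n) / 2)^2 - real n * exp (- (ln (real n) / 2))) \<le> real n"
    by real_asymp
  then show ?thesis
  proof (rule eventually_mono, intro allI impI)
    fix n :: nat and d :: real
    assume bound: "exp 1 * (real n * (ln (real n) / 2) + 1)
          * exp (ln (real n) / 2 + (ln (real n) / 2)^2 - real n * exp (- (ln (real n) / 2))) \<le> real n"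
      and d: "0 \<le> d \<and> d \<le> ln (real n) / 2"
    have "d^2 \<le> (ln (real n) / 2)^2" "real n * exp (- (ln (real n) / 2)) \<le> real n * exp (- d)"
      using d by (auto intro: power_mono mult_left_mono)
    then have "d + d^2 - real n * exp (- d)
                 \<le> ln (real n) / 2 + (ln (real n) / 2)^2 - real n * exp (- (ln (real n) / 2))"
      using d by linarith
    moreover have "real n * d + 1 \<le> real n * (ln (real n) / 2) + 1"
      using d mult_left_mono[of d "ln (real n) / 2" "real n"] by simp
    ultimately have "exp 1 * (real n * d + 1) * exp (d + d^2 - real n * exp (- d))
          \<le> exp 1 * (real n * (ln (real n) / 2) + 1)
              * exp (ln (real n) / 2 + (ln (real n) / 2)^2 - real n * exp (- (ln (real n) / 2)))"
      using d by (intro mult_mono) auto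
    with bound show "exp 1 * (real n * d + 1) * exp (d + d^2 - real n * exp (- d)) \<le> real n"
      by linarith
  qed
qed

lemma eventually_prob_min_degree_ge2_le:
  "\<forall>\<^sub>F n in at_top. \<forall>m. 2 * real m / real n \<le> ln (real n) / 2 \<longrightarrow>
     measure_pmf.prob (Gnm n m) {E. 2 \<le> min_degree n E}
       \<le> real n * exp (- 2 * real m * exp (- 2 * real m / real n))"
proof -
  have "\<forall>\<^sub>F n in at_top. real n + real n * ln (real n) / 2 \<le> real n ^ 2 / 2"
    by real_asymp
  then show ?thesis
    using eventually_error_factor_le eventually_ge_at_top[of 1]
  proof eventually_elim
    case (elim n)
    show ?case
    proof (intro allI impI)
      fix m assume small: "2 * real m / real n \<le> ln (real n) / 2"
      define d where "d = 2 * real m / real n"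
      have nd: "real n * d = 2 * real m" and d: "0 \<le> d" "d \<le> ln (real n) / 2"
        using elim(3) small unfolding d_def by auto
      show "measure_pmf.prob (Gnm n m) {E. 2 \<le> min_degree n E}
              \<le> real n * exp (- 2 * real m * exp (- 2 * real m / real n))"
      proof (cases "m = 0")
        case True
        have "measure_pmf.prob (Gnm n m) {E. 2 \<le> min_degree n E} \<le> 1"
          by (rule measure_pmf.prob_le_1)
        also have "1 \<le> real n * exp (- 2 * real m * exp (- 2 * real m / real n))"
          using True elim(3) by simp
        finally show ?thesis .
      next
        case False
        have "2 * real m \<le> real n * ln (real n) / 2"
          using mult_left_mono[OF d(2), of "real n"] nd by simp
        then have "real n + 2 * real m \<le> real n ^ 2 / 2"
          using elim(1) by linarith
        then have "measure_pmf.prob (Gnm n m) {E. 2 \<le> min_degree n E}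
            \<le> exp 1 * (real n * d + 1) * exp (d + d^2 - real n * exp (- d))
                * exp (- 2 * real m * exp (- d))"
          using prob_min_degree_ge2_le_exp False unfolding d_def by simp
        also have "\<dots> \<le> real n * exp (- 2 * real m * exp (- d))"
          using elim(2) d by (intro mult_right_mono) auto
        finally show ?thesis
          by (simp add: d_def)
      qed
    qed
  qed
qed

lemma eventually_edge_density_le_half_ln:
  fixes m :: "nat \<Rightarrow> nat"
  assumes "(\<lambda>n. real (m n)) \<in> O(\<lambda>n. real n * ln (ln (real n)))"
  shows "\<forall>\<^sub>F n in at_top. 2 * real (m n) / real n \<le> ln (real n) / 2"
proof -
  have "(\<lambda>n. real n * ln (ln (real n))) \<in> o(\<lambda>n. real n * ln (real n))"
    by real_asymp
  with assms have "(\<lambda>n. real (m n)) \<in> o(\<lambda>n. real n * ln (real n))"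
    by (rule landau_o.big_small_trans)
  then have "\<forall>\<^sub>F n in at_top. norm (real (m n)) \<le> 1 / 4 * norm (real n * ln (real n))"
    by (rule landau_o.smallD) simp
  with eventually_ge_at_top[of 1] show ?thesis
    by eventually_elim (simp add: field_simps)
qed

theorem lemma6p1:
  fixes m :: "nat \<Rightarrow> nat"
  assumes "(\<lambda>n. real (m n)) \<in> O(\<lambda>n. real n * ln (ln (real n)))"
  shows "\<forall>\<^sub>F n in at_top.
           measure_pmf.prob (Gnm n (m n)) {E. 2 \<le> min_degree n E}
             \<le> real n * exp (- 2 * real (m n) * exp (- 2 * real (m n) / real n))"
  using eventually_edge_density_le_half_ln[OF assms] eventually_prob_min_degree_ge2_le
  by eventually_elim blast

end
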